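(* Let $T$ be a finite rooted unweighted tree with root $r_T$ and height $h_T$, and consider the Hydra game on $T$ played by $\mathrm{HERC}$. Define the potential $\Phi = 4\, h_T\, H(\mathrm{rank}(r_T)) + \sum_{w \in T} \eta(w)\,\mathrm{level}(w)$. Fix any step in which the adversary kills an alive node $u$ (with the game not yet ended before the step) and, as a result, $\mathrm{HERC}$ changes its distribution from $\eta$ to $\eta'$. Let $\Delta\mathrm{HERC} = \sum_{w \neq u} (\eta'(w)-\eta(w))\,\mathrm{dist}(u,w)$ be the cost incurred by $\mathrm{HERC}$ in this step and let $\Delta\Phi$ be the resulting change of $\Phi$. Then $\Delta\Phi \le -\Delta\mathrm{HERC}$.
   Context: Hydra game: it is played on a fixed finite rooted unweighted tree $T$ known in advance. Each node is asleep, alive, or dead. Initially the root $r_T$ is alive and all other nodes are asleep. In each step the adversary picks an alive node $w$, makes it dead, and makes all its children alive. The game ends when all nodes except one are dead. $\mathrm{dist}(u,w)$ is the length of the shortest path between $u$ and $w$ in $T$. $\mathrm{rank}(u)$ is the number of non-dead leaves in the subtree rooted at $u$ (at the current time); $\mathrm{level}(u)$ is the height of the subtree rooted at $u$ (leaves have level $0$, $h_T=\mathrm{level}(r_T)$). $H(n)=\sum_{i=1}^n 1/i$. Algorithm $\mathrm{HERC}$ maintains the probability distribution $\eta$ with $\eta(u)=\mathrm{rank}(u)/\mathrm{rank}(r_T)$ for alive $u$ and $\eta(u)=0$ otherwise. When $u$ is killed, the new distribution $\eta'$ has $\eta'(u)=0$ and: if $u$ is not a leaf, $\eta'(w)=(\mathrm{rank}(w)/\mathrm{rank}(u))\,\eta(u)$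 for each child $w$ of $u$ and $\eta'=\eta$ elsewhere; if $u$ is a leaf, $\eta'(w)=\eta(w)/(1-\eta(u))$ for all $w\neq u$. Moving probability mass $p$ from node $u$ to node $w$ is charged cost $p\cdot\mathrm{dist}(u,w)$. *)

theory Defs
  imports "HOL-Analysis.Analysis"
begin

(* A finite rooted tree: node set V, root r, parent function p.
   Convention: p r = r (the root's "parent" is irrelevant; it is never an edge). *)
definition rooted_tree :: "'a set \<Rightarrow> 'a \<Rightarrow> ('a \<Rightarrow> 'a) \<Rightarrow> bool" where
  "rooted_tree V r p \<longleftrightarrow> finite V \<and> r \<in> V \<and> p r = r \<and>
     (\<forall>v \<in> V. p v \<in> V) \<and> (\<forall>v \<in> V. \<exists>n. (p ^^ n) v = r)"

definition children :: "'a set \<Rightarrow> 'a \<Rightarrow> ('a \<Rightarrow> 'a) \<Rightarrow> 'a \<Rightarrow> 'a set" where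
  "children V r p u = {w \<in> V. w \<noteq> r \<and> p w = u}"

definition subtree :: "'a set \<Rightarrow> ('a \<Rightarrow> 'a) \<Rightarrow> 'a \<Rightarrow> 'a set" where
  "subtree V p u = {w \<in> V. \<exists>n. (p ^^ n) w = u}"

definition is_leaf :: "'a set \<Rightarrow> 'a \<Rightarrow> ('a \<Rightarrow> 'a) \<Rightarrow> 'a \<Rightarrow> bool" where
  "is_leaf V r p w \<longleftrightarrow> w \<in> V \<and> children V r p w = {}"

definition adj :: "'a set \<Rightarrow> 'a \<Rightarrow> ('a \<Rightarrow> 'a) \<Rightarrow> 'a \<Rightarrow> 'a \<Rightarrow> bool" where
  "adj V r p x y \<longleftrightarrow> x \<in> V \<and> y \<in> V \<and> ((x \<noteq> r \<and> p x = y) \<or> (y \<noteq> r \<and> p y = x))"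

definition tdist :: "'a set \<Rightarrow> 'a \<Rightarrow> ('a \<Rightarrow> 'a) \<Rightarrow> 'a \<Rightarrow> 'a \<Rightarrow> nat" where
  "tdist V r p u w = (LEAST n. \<exists>xs. length xs = Suc n \<and> hd xs = u \<and> last xs = w \<and>
       (\<forall>i < n. adj V r p (xs ! i) (xs ! Suc i)))"

definition level :: "'a set \<Rightarrow> 'a \<Rightarrow> ('a \<Rightarrow> 'a) \<Rightarrow> 'a \<Rightarrow> nat" where
  "level V r p u = Max (tdist V r p u ` subtree V p u)"

datatype status = Asleep | Alive | Dead

definition init_state :: "'a \<Rightarrow> 'a \<Rightarrow> status" where
  "init_state r = (\<lambda>v. if v = r then Alive else Asleep)"

definition game_ended :: "'a set \<Rightarrow> ('a \<Rightarrow> status) \<Rightarrow> bool" where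
  "game_ended V st \<longleftrightarrow> card {v \<in> V. st v \<noteq> Dead} = 1"

definition kill :: "'a set \<Rightarrow> 'a \<Rightarrow> ('a \<Rightarrow> 'a) \<Rightarrow> ('a \<Rightarrow> status) \<Rightarrow> 'a \<Rightarrow> ('a \<Rightarrow> status)" where
  "kill V r p st u = (\<lambda>v. if v = u then Dead
                          else if v \<in> children V r p u then Alive else st v)"

inductive reachable :: "'a set \<Rightarrow> 'a \<Rightarrow> ('a \<Rightarrow> 'a) \<Rightarrow> ('a \<Rightarrow> status) \<Rightarrow> bool"
  for V r p where
  init: "reachable V r p (init_state r)"
| step: "reachable V r p st \<Longrightarrow> \<not> game_ended V st \<Longrightarrow> u \<in> V \<Longrightarrow> st u = Alive \<Longrightarrow>
         reachable V r p (kill V r p st u)"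

definition rank :: "'a set \<Rightarrow> 'a \<Rightarrow> ('a \<Rightarrow> 'a) \<Rightarrow> ('a \<Rightarrow> status) \<Rightarrow> 'a \<Rightarrow> nat" where
  "rank V r p st u = card {w \<in> subtree V p u. is_leaf V r p w \<and> st w \<noteq> Dead}"

definition eta :: "'a set \<Rightarrow> 'a \<Rightarrow> ('a \<Rightarrow> 'a) \<Rightarrow> ('a \<Rightarrow> status) \<Rightarrow> 'a \<Rightarrow> real" where
  "eta V r p st u = (if st u = Alive then real (rank V r p st u) / real (rank V r p st r) else 0)"

definition Phi :: "'a set \<Rightarrow> 'a \<Rightarrow> ('a \<Rightarrow> 'a) \<Rightarrow> ('a \<Rightarrow> status) \<Rightarrow> real" where
  "Phi V r p st = 4 * real (level V r p r) * harm (rank V r p st r)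
     + (\<Sum>w\<in>V. eta V r p st w * real (level V r p w))"

definition herc_cost :: "'a set \<Rightarrow> 'a \<Rightarrow> ('a \<Rightarrow> 'a) \<Rightarrow> ('a \<Rightarrow> status) \<Rightarrow> ('a \<Rightarrow> status) \<Rightarrow> 'a \<Rightarrow> real" where
  "herc_cost V r p st st' u =
     (\<Sum>w\<in>V - {u}. (eta V r p st' w - eta V r p st w) * real (tdist V r p u w))"

end

(* Killing an inner node u hands the mass eta(u) to the children of u in proportion to their
   ranks: every unit travels distance 1 and lands on a node whose level is smaller by at least 1,
   so the drop of the level term pays for the move.  Killing a leaf lowers rank(r_T) from R to
   R - 1, which releases 4 h_T / R from the harmonic term, while renormalisation adds a total
   mass of at most 1/R to the other alive nodes; each unit of it travels at most 2 h_T and raises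
   the level term by at most h_T.  The only property of reachable states needed is that the alive
   nodes form an antichain: strictly below an alive node everything is asleep, strictly above it
   everything is dead. *)

theory Submission
  imports Defs
begin

lemma funpow_apply_add: "(f ^^ m) ((f ^^ n) x) = (f ^^ (m + n)) x"
  by (simp add: funpow_add)

locale finite_tree =
  fixes V :: "'a set" and r :: 'a and p :: "'a \<Rightarrow> 'a"
  assumes rooted_tree: "rooted_tree V r p"
begin

abbreviation "sub \<equiv> subtree V p"
abbreviation "ch \<equiv> children V r p"
abbreviation "dT \<equiv> tdist V r p"
abbreviation "lvl \<equiv> level V r p"
abbreviation "height \<equiv> level V r p r"

lemma finite_V: "finite V" and parent_root: "p r = r"
  and parent_in_V: "v \<in> V \<Longrightarrow> p v \<in> V" and reaches_root: "v \<in> V \<Longrightarrow> \<exists>n. (p ^^ n) v = r"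
  using rooted_tree unfolding rooted_tree_def by auto

lemma funpow_parent_in_V: "x \<in> V \<Longrightarrow> (p ^^ n) x \<in> V"
  by (induction n) (auto simp: parent_in_V)

lemma funpow_parent_root: "(p ^^ n) r = r"
  by (induction n) (auto simp: parent_root)

lemma adj_sym: "adj V r p x y \<longleftrightarrow> adj V r p y x"
  unfolding adj_def by blast

subsection \<open>Depth\<close>

definition depth :: "'a \<Rightarrow> nat" where
  "depth x = (LEAST n. (p ^^ n) x = r)"

lemma funpow_depth: "x \<in> V \<Longrightarrow> (p ^^ depth x) x = r"
  unfolding depth_def using reaches_root by (rule LeastI_ex)

lemma depth_le: "(p ^^ n) x = r \<Longrightarrow> depth x \<le> n"
  unfolding depth_def by (rule Least_le)

lemma funpow_below_depth: "i < depth x \<Longrightarrow> (p ^^ i) x \<noteq> r"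
  unfolding depth_def using not_less_Least by blast

lemma depth_root [simp]: "depth r = 0"
  using depth_le[of 0 r] by simp

lemma depth_eq_0_iff: "x \<in> V \<Longrightarrow> depth x = 0 \<longleftrightarrow> x = r"
  using funpow_depth[of x] by auto

lemma depth_funpow:
  assumes "x \<in> V" "i \<le> depth x"
  shows "depth x = i + depth ((p ^^ i) x)"
proof -
  let ?y = "(p ^^ i) x"
  have "(p ^^ (depth x - i)) ?y = r"
    using funpow_depth[OF assms(1)] assms(2) by (simp add: funpow_apply_add)
  then have "depth ?y \<le> depth x - i" by (rule depth_le)
  moreover have "(p ^^ (depth ?y + i)) x = r"
    using funpow_depth[OF funpow_parent_in_V[OF assms(1)]] by (simp add: funpow_apply_add)
  then have "depth x \<le> depth ?y + i" by (rule depth_le)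
  ultimately show ?thesis using assms(2) by linarith
qed

lemma depth_parent: "x \<in> V \<Longrightarrow> x \<noteq> r \<Longrightarrow> depth x = Suc (depth (p x))"
  using depth_funpow[of x 1] depth_eq_0_iff[of x] by simp

lemma depth_adj: "adj V r p x y \<Longrightarrow> depth y \<le> Suc (depth x)"
  unfolding adj_def using depth_parent by fastforce

subsection \<open>Walks and tree distance\<close>

definition walk :: "(nat \<Rightarrow> 'a) \<Rightarrow> nat \<Rightarrow> 'a \<Rightarrow> 'a \<Rightarrow> bool" where
  "walk f n a b \<longleftrightarrow> f 0 = a \<and> f n = b \<and> (\<forall>i<n. adj V r p (f i) (f (Suc i)))"

lemma tdist_eq_Least_walk: "dT a b = (LEAST n. \<exists>f. walk f n a b)"
proof -
  let ?path = "\<lambda>n xs. length xs = Suc n \<and> hd xs = a \<and> last xs = b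
    \<and> (\<forall>i<n. adj V r p (xs ! i) (xs ! Suc i))"
  have "(\<exists>xs. ?path n xs) \<longleftrightarrow> (\<exists>f. walk f n a b)" for n
  proof
    assume "\<exists>xs. ?path n xs"
    then obtain xs where "?path n xs" ..
    then have "walk ((!) xs) n a b"
      unfolding walk_def by (metis diff_Suc_1 hd_conv_nth last_conv_nth list.size(3) nat.distinct(1))
    then show "\<exists>f. walk f n a b" by blast
  next
    assume "\<exists>f. walk f n a b"
    then obtain f where "walk f n a b" ..
    then have "?path n (map f [0..<Suc n])"
      unfolding walk_def by (simp add: hd_conv_nth last_conv_nth del: upt_Suc)
    then show "\<exists>xs. ?path n xs" by blast
  qed
  then show ?thesis unfolding tdist_def by presburger
qed

lemma tdist_le_walk: "walk f n a b \<Longrightarrow> dT a b \<le> n"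
  unfolding tdist_eq_Least_walk by (blast intro: Least_le)

lemma shortest_walk_exists: "walk f n a b \<Longrightarrow> \<exists>g. walk g (dT a b) a b"
  unfolding tdist_eq_Least_walk by (rule LeastI_ex) blast

lemma walk_rev:
  assumes "walk f n a b"
  shows "walk (\<lambda>i. f (n - i)) n b a"
  unfolding walk_def
proof (intro conjI allI impI)
  fix i assume "i < n"
  then have "adj V r p (f (n - Suc i)) (f (Suc (n - Suc i)))"
    using assms unfolding walk_def by simp
  then show "adj V r p (f (n - i)) (f (n - Suc i))"
    using \<open>i < n\<close> by (simp add: adj_sym Suc_diff_Suc)
qed (use assms in \<open>simp_all add: walk_def\<close>)

lemma walk_append:
  assumes "walk f m a b" "walk g n b c"
  shows "walk (\<lambda>i. if i \<le> m then f i else g (i - m)) (m + n) a c"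
  unfolding walk_def
proof (intro conjI allI impI)
  fix i assume "i < m + n"
  then show "adj V r p (if i \<le> m then f i else g (i - m))
      (if Suc i \<le> m then f (Suc i) else g (Suc i - m))"
    using assms unfolding walk_def
    by (cases "i < m"; cases "i = m") (auto simp: Suc_diff_le)
qed (use assms in \<open>auto simp: walk_def\<close>)

lemma walk_up:
  assumes "x \<in> V" "k \<le> depth x"
  shows "walk (\<lambda>i. (p ^^ i) x) k x ((p ^^ k) x)"
  unfolding walk_def
proof (intro conjI allI impI)
  fix i assume "i < k"
  then have "(p ^^ i) x \<in> V" "(p ^^ i) x \<noteq> r"
    using assms funpow_below_depth funpow_parent_in_V by auto
  then show "adj V r p ((p ^^ i) x) ((p ^^ Suc i) x)"
    unfolding adj_def using parent_in_V by simp
qed simp_all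

lemma depth_walk: "walk f n a b \<Longrightarrow> depth b \<le> depth a + n"
proof (induction n arbitrary: b)
  case 0 then show ?case by (auto simp: walk_def)
next
  case (Suc n)
  then have "walk f n a (f n)" "adj V r p (f n) b" by (auto simp: walk_def)
  with Suc.IH show ?case using depth_adj by fastforce
qed

lemma walk_through_root:
  assumes "a \<in> V" "b \<in> V"
  shows "\<exists>f. walk f (depth a + depth b) a b"
proof -
  have "walk (\<lambda>i. (p ^^ i) a) (depth a) a r" "walk (\<lambda>i. (p ^^ i) b) (depth b) b r"
    using walk_up funpow_depth assms by fastforce+
  then show ?thesis by (blast intro: walk_append walk_rev)
qed

lemma tdist_le_depth_add: "a \<in> V \<Longrightarrow> b \<in> V \<Longrightarrow> dT a b \<le> depth a + depth b"
  using walk_through_root tdist_le_walk by blast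

lemma depth_le_tdist: "a \<in> V \<Longrightarrow> b \<in> V \<Longrightarrow> depth b \<le> depth a + dT a b"
  using walk_through_root shortest_walk_exists depth_walk by blast

subsection \<open>Subtrees and levels\<close>

lemma subtree_subset_V: "sub a \<subseteq> V"
  by (auto simp: subtree_def)

lemma finite_subtree: "finite (sub a)"
  using finite_V subtree_subset_V by (rule finite_subset[rotated])

lemma subtree_root: "sub r = V"
  using reaches_root by (auto simp: subtree_def)

lemma self_in_subtree: "a \<in> V \<Longrightarrow> a \<in> sub a"
  unfolding subtree_def by (auto intro: exI[of _ 0])

lemma subtree_top_in_V: "x \<in> sub a \<Longrightarrow> a \<in> V"
  unfolding subtree_def using funpow_parent_in_V by blast

lemma subtree_trans: "a \<in> sub b \<Longrightarrow> x \<in> sub a \<Longrightarrow> x \<in> sub b"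
  unfolding subtree_def by (auto simp: funpow_apply_add)

lemma subtree_within_depth:
  assumes "x \<in> sub a"
  obtains k where "k \<le> depth x" "(p ^^ k) x = a"
proof -
  obtain k where k: "(p ^^ k) x = a" and xV: "x \<in> V"
    using assms by (auto simp: subtree_def)
  show thesis
  proof (cases "k \<le> depth x")
    case True then show thesis using k that by blast
  next
    case False
    have "a = (p ^^ (k - depth x)) ((p ^^ depth x) x)"
      using k False by (simp add: funpow_apply_add)
    then have "a = (p ^^ depth x) x"
      using funpow_depth[OF xV] funpow_parent_root by simp
    then show thesis using that by blast
  qed
qed

lemma depth_subtree:
  assumes "x \<in> sub a"
  shows "depth x = depth a + dT a x"
proof -
  have xV: "x \<in> V" and aV: "a \<in> V"
    using assms subtree_subset_V subtree_top_in_V by auto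
  obtain k where k: "k \<le> depth x" "(p ^^ k) x = a"
    using assms by (rule subtree_within_depth)
  have "depth x = k + depth a"
    using depth_funpow[OF xV k(1)] k(2) by simp
  moreover have "dT a x \<le> k"
    using walk_rev[OF walk_up[OF xV k(1)]] k(2) by (auto intro: tdist_le_walk)
  ultimately show ?thesis
    using depth_le_tdist[OF aV xV] by linarith
qed

lemma subtree_antisym:
  assumes "a \<in> sub b" "b \<in> sub a"
  shows "a = b"
proof -
  obtain k where k: "k \<le> depth a" "(p ^^ k) a = b"
    using assms(1) by (rule subtree_within_depth)
  have "depth a = k + depth b"
    using depth_funpow[OF _ k(1)] k(2) assms(1) subtree_subset_V by auto
  moreover have "depth a \<le> depth b"
    using depth_subtree[OF assms(2)] by simp
  ultimately show ?thesis using k(2) by simp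
qed

lemma subtree_comparable:
  assumes "x \<in> sub a" "x \<in> sub b"
  shows "a \<in> sub b \<or> b \<in> sub a"
proof -
  obtain i j where i: "(p ^^ i) x = a" and j: "(p ^^ j) x = b"
    using assms by (auto simp: subtree_def)
  have "a \<in> V" "b \<in> V"
    using assms subtree_top_in_V by auto
  show ?thesis
  proof (cases "i \<le> j")
    case True
    then have "(p ^^ (j - i)) a = b"
      unfolding i[symmetric] j[symmetric] by (simp add: funpow_apply_add)
    then show ?thesis using \<open>a \<in> V\<close> by (auto simp: subtree_def)
  next
    case False
    then have "(p ^^ (i - j)) b = a"
      unfolding i[symmetric] j[symmetric] by (simp add: funpow_apply_add)
    then show ?thesis using \<open>b \<in> V\<close> by (auto simp: subtree_def)
  qed
qed

lemma parent_in_subtree: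
  assumes "x \<in> sub a" "x \<noteq> a"
  shows "p x \<in> sub a"
proof -
  obtain n where n: "(p ^^ n) x = a" and "x \<in> V"
    using assms(1) by (auto simp: subtree_def)
  then obtain k where "n = Suc k"
    using assms(2) by (cases n) auto
  then have "(p ^^ k) (p x) = a"
    using n by (simp add: funpow_Suc_right del: funpow.simps)
  then show ?thesis
    using parent_in_V[OF \<open>x \<in> V\<close>] by (auto simp: subtree_def)
qed

lemma child_in_V: "c \<in> ch u \<Longrightarrow> c \<in> V" and parent_child: "c \<in> ch u \<Longrightarrow> p c = u"
  and child_not_root: "c \<in> ch u \<Longrightarrow> c \<noteq> r"
  by (simp_all add: children_def)

lemma child_in_subtree: "c \<in> ch u \<Longrightarrow> c \<in> sub u"
  unfolding subtree_def children_def by (auto intro: exI[of _ 1])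

lemma depth_child: "c \<in> ch u \<Longrightarrow> depth c = Suc (depth u)"
  using depth_parent child_in_V parent_child child_not_root by metis

lemma child_neq: "c \<in> ch u \<Longrightarrow> c \<noteq> u"
  using depth_child by force

lemma children_subtrees_disjoint:
  assumes "c \<in> ch u" "c' \<in> ch u" "c \<noteq> c'"
  shows "sub c \<inter> sub c' = {}"
proof -
  have "u \<notin> sub c" if "c \<in> ch u" for c
    using subtree_antisym[OF child_in_subtree] child_neq that by blast
  moreover have "u \<in> sub d" if "c \<in> sub d" "c \<noteq> d" "c \<in> ch u" for c d
    using parent_in_subtree[OF that(1,2)] parent_child[OF that(3)] by simp
  ultimately have "c \<notin> sub c'" "c' \<notin> sub c"
    using assms by blast+
  then show ?thesis
    using subtree_comparable by blast
qed

lemma tdist_le_level: "x \<in> sub u \<Longrightarrow> dT u x \<le> lvl u"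
  unfolding level_def by (rule Max_ge) (auto simp: finite_subtree)

lemma level_attained:
  assumes "u \<in> V"
  obtains x where "x \<in> sub u" "lvl u = dT u x"
  using Max_in[of "dT u ` sub u"] finite_subtree self_in_subtree[OF assms]
  unfolding level_def by blast

lemma depth_le_height: "x \<in> V \<Longrightarrow> depth x \<le> height"
  using depth_subtree tdist_le_level subtree_root by fastforce

lemma level_le_height:
  assumes "w \<in> V"
  shows "lvl w \<le> height"
proof -
  obtain x where "x \<in> sub w" "lvl w = dT w x"
    using assms by (rule level_attained)
  then show ?thesis
    using depth_subtree depth_le_height subtree_subset_V by fastforce
qed

lemma tdist_le_twice_height:
  assumes "a \<in> V" "b \<in> V"
  shows "dT a b \<le> 2 * height"
  using tdist_le_depth_add[OF assms] depth_le_height[OF assms(1)] depth_le_height[OF assms(2)]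
  by linarith

lemma level_child:
  assumes "c \<in> ch u"
  shows "Suc (lvl c) \<le> lvl u"
proof -
  obtain x where x: "x \<in> sub c" "lvl c = dT c x"
    using child_in_V[OF assms] by (rule level_attained)
  have "x \<in> sub u"
    using subtree_trans child_in_subtree assms x(1) by blast
  then have "depth x \<le> depth u + lvl u"
    using depth_subtree tdist_le_level by fastforce
  then show ?thesis
    using depth_subtree[OF x(1)] depth_child[OF assms] x(2) by linarith
qed

lemma tdist_child: "c \<in> ch u \<Longrightarrow> dT u c \<le> 1"
  using tdist_le_walk[of "\<lambda>i. if i = 0 then u else c" 1 u c]
  unfolding walk_def adj_def children_def
  using parent_in_V by force

subsection \<open>Game states\<close>

abbreviation "rk \<equiv> rank V r p"
abbreviation "\<eta> \<equiv> eta V r p"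

definition hydra_inv :: "('a \<Rightarrow> status) \<Rightarrow> bool" where
  "hydra_inv s \<longleftrightarrow> (\<forall>v\<in>V. s v = Alive \<longrightarrow>
     (\<forall>w\<in>sub v. w \<noteq> v \<longrightarrow> s w = Asleep) \<and> (\<forall>a. v \<in> sub a \<longrightarrow> a \<noteq> v \<longrightarrow> s a = Dead))"

lemma asleep_below_alive:
  "hydra_inv s \<Longrightarrow> s v = Alive \<Longrightarrow> w \<in> sub v \<Longrightarrow> w \<noteq> v \<Longrightarrow> s w = Asleep"
  unfolding hydra_inv_def using subtree_top_in_V by blast

lemma dead_above_alive:
  "hydra_inv s \<Longrightarrow> s v = Alive \<Longrightarrow> v \<in> sub a \<Longrightarrow> a \<noteq> v \<Longrightarrow> s a = Dead"
  unfolding hydra_inv_def using subtree_subset_V by blast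

lemma alive_subtrees_disjoint:
  assumes "hydra_inv s" "s v = Alive" "s w = Alive" "v \<noteq> w"
  shows "sub v \<inter> sub w = {}"
proof (rule ccontr)
  assume "sub v \<inter> sub w \<noteq> {}"
  then have "v \<in> sub w \<or> w \<in> sub v"
    using subtree_comparable by blast
  then show False
    using dead_above_alive[OF assms(1)] assms(2-4) by fastforce
qed

lemma kill_self: "kill V r p s u u = Dead"
  and kill_child: "c \<in> ch u \<Longrightarrow> kill V r p s u c = Alive"
  and kill_other: "x \<noteq> u \<Longrightarrow> x \<notin> ch u \<Longrightarrow> kill V r p s u x = s x"
  using child_neq by (auto simp: kill_def)

lemma children_of_alive_asleep:
  "hydra_inv s \<Longrightarrow> s u = Alive \<Longrightarrow> c \<in> ch u \<Longrightarrow> s c = Asleep"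
  using asleep_below_alive child_in_subtree child_neq by blast

lemma hydra_inv_init: "hydra_inv (init_state r)"
proof -
  have "a = r" if "r \<in> sub a" for a
    using that funpow_parent_root by (auto simp: subtree_def)
  then show ?thesis
    unfolding hydra_inv_def init_state_def by auto
qed

lemma alive_after_kill: "kill V r p s u v = Alive \<Longrightarrow> v \<in> ch u \<or> (v \<noteq> u \<and> s v = Alive)"
  using kill_self kill_other by (metis status.distinct(5))

lemma asleep_below_alive_after_kill:
  assumes inv: "hydra_inv s" and alive: "s u = Alive"
    and v: "kill V r p s u v = Alive" and w: "w \<in> sub v" "w \<noteq> v"
  shows "kill V r p s u w = Asleep"
proof -
  have "s w = Asleep"
  proof (cases "v \<in> ch u")
    case True
    then have "w \<noteq> u"
      using w(1) child_in_subtree child_neq subtree_antisym by blast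
    then show ?thesis
      using asleep_below_alive[OF inv alive] w(1) True child_in_subtree subtree_trans by blast
  next
    case False
    then show ?thesis
      using alive_after_kill[OF v] asleep_below_alive[OF inv] w by blast
  qed
  moreover have "w \<notin> ch u"
  proof
    assume "w \<in> ch u"
    then have "u \<in> sub v"
      using parent_in_subtree[OF w] parent_child by simp
    then show False
      using alive_after_kill[OF v] asleep_below_alive[OF inv] alive child_in_subtree child_neq
        subtree_antisym by fastforce
  qed
  ultimately show ?thesis
    using alive kill_other by (metis status.distinct(1))
qed

lemma dead_above_alive_after_kill:
  assumes inv: "hydra_inv s" and alive: "s u = Alive"
    and v: "kill V r p s u v = Alive" and a: "v \<in> sub a" "a \<noteq> v"
  shows "kill V r p s u a = Dead"
proof (cases "a = u")
  case True then show ?thesis by (simp add: kill_self)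
next
  case False
  have "s a = Dead"
  proof (cases "v \<in> ch u")
    case True
    then have "u \<in> sub a"
      using parent_in_subtree[of v a] a parent_child by auto
    then show ?thesis
      using dead_above_alive[OF inv alive] False by blast
  next
    case False
    then show ?thesis
      using alive_after_kill[OF v] dead_above_alive[OF inv] a by blast
  qed
  then show ?thesis
    using False children_of_alive_asleep[OF inv alive] kill_other by fastforce
qed

lemma hydra_inv_kill: "hydra_inv s \<Longrightarrow> s u = Alive \<Longrightarrow> hydra_inv (kill V r p s u)"
  unfolding hydra_inv_def[of "kill V r p s u"]
  using asleep_below_alive_after_kill dead_above_alive_after_kill by blast

lemma reachable_hydra_inv: "reachable V r p s \<Longrightarrow> hydra_inv s"
  by (induction rule: reachable.induct) (auto intro: hydra_inv_init hydra_inv_kill)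

subsection \<open>Ranks\<close>

lemma sum_rank_le:
  assumes "A \<subseteq> sub v"
    and disjoint: "\<And>a b. a \<in> A \<Longrightarrow> b \<in> A \<Longrightarrow> a \<noteq> b \<Longrightarrow> sub a \<inter> sub b = {}"
  shows "(\<Sum>a\<in>A. rk s a) \<le> rk s v"
proof -
  let ?L = "\<lambda>a. {w \<in> sub a. is_leaf V r p w \<and> s w \<noteq> Dead}"
  have "finite A"
    using assms(1) finite_subtree by (rule finite_subset)
  then have "(\<Sum>a\<in>A. rk s a) = card (\<Union>a\<in>A. ?L a)"
    unfolding rank_def using disjoint finite_subtree by (subst card_UN_disjoint) auto
  also have "\<dots> \<le> rk s v"
    unfolding rank_def using assms(1) subtree_trans finite_subtree by (intro card_mono) auto
  finally show ?thesis .
qed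

lemma rank_cong:
  assumes "\<And>x. x \<in> sub a \<Longrightarrow> is_leaf V r p x \<Longrightarrow> s' x = Dead \<longleftrightarrow> s x = Dead"
  shows "rk s' a = rk s a"
  unfolding rank_def using assms by (intro arg_cong[where f = card] Collect_cong) blast

lemma rank_kill:
  assumes inv: "hydra_inv s" and alive: "s u = Alive"
    and untouched: "u \<notin> sub w \<or> \<not> is_leaf V r p u"
  shows "rk (kill V r p s u) w = rk s w"
proof (rule rank_cong)
  fix x assume "x \<in> sub w" "is_leaf V r p x"
  then have "x \<noteq> u" using untouched by blast
  then show "kill V r p s u x = Dead \<longleftrightarrow> s x = Dead"
    by (cases "x \<in> ch u")
      (simp_all add: kill_child kill_other children_of_alive_asleep[OF inv alive])
qed

lemma rank_le_root: "w \<in> V \<Longrightarrow> rk s w \<le> rk s r"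
  using sum_rank_le[of "{w}" r] subtree_root by simp

lemma rank_kill_alive:
  assumes "hydra_inv s" "s u = Alive" "s w = Alive" "w \<noteq> u"
  shows "rk (kill V r p s u) w = rk s w"
  using rank_kill[OF assms(1,2)] dead_above_alive[OF assms(1,2)] assms(3,4) by fastforce

lemma sum_rank_alive_le: "hydra_inv s \<Longrightarrow> (\<Sum>w | w \<in> V \<and> s w = Alive. rk s w) \<le> rk s r"
  using alive_subtrees_disjoint subtree_root by (intro sum_rank_le) auto

lemma rank_root_kill_leaf:
  assumes "is_leaf V r p u" "s u = Alive"
  shows "rk s r = Suc (rk (kill V r p s u) r)"
proof -
  let ?L = "\<lambda>s. {w \<in> sub r. is_leaf V r p w \<and> s w \<noteq> Dead}"
  have "?L (kill V r p s u) = ?L s - {u}"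
    using assms(1) by (auto simp: kill_def is_leaf_def)
  moreover have "u \<in> ?L s"
    using assms subtree_root by (simp add: is_leaf_def)
  then have "card (?L s) = Suc (card (?L s - {u}))"
    using card_Suc_Diff1[of "?L s" u] finite_subtree by fastforce
  ultimately show ?thesis
    unfolding rank_def by simp
qed

subsection \<open>The potential\<close>

lemma Phi_diff_add_herc_cost:
  assumes "u \<in> V"
  shows "Phi V r p s' - Phi V r p s + herc_cost V r p s s' u =
      4 * real height * (harm (rk s' r) - harm (rk s r)) + (\<eta> s' u - \<eta> s u) * real (lvl u)
      + (\<Sum>w\<in>V - {u}. (\<eta> s' w - \<eta> s w) * real (lvl w + dT u w))"
proof -
  have "(\<Sum>w\<in>V. \<eta> s' w * real (lvl w)) - (\<Sum>w\<in>V. \<eta> s w * real (lvl w))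
      = (\<eta> s' u - \<eta> s u) * real (lvl u) + (\<Sum>w\<in>V - {u}. (\<eta> s' w - \<eta> s w) * real (lvl w))"
    by (simp add: sum.remove[OF finite_V assms] left_diff_distrib sum_subtractf)
  then show ?thesis
    unfolding Phi_def herc_cost_def
    by (simp add: sum.distrib sum_subtractf algebra_simps)
qed

lemma eta_nonneg: "0 \<le> \<eta> s w"
  by (simp add: eta_def)

lemma eta_kill_self: "\<eta> (kill V r p s u) u = 0"
  by (simp add: eta_def kill_self)

lemma eta_kill_inner:
  assumes inv: "hydra_inv s" and alive: "s u = Alive" and "\<not> is_leaf V r p u" "w \<noteq> u"
  shows "\<eta> (kill V r p s u) w - \<eta> s w = (if w \<in> ch u then real (rk s w) / real (rk s r) else 0)"
  using assms rank_kill[OF inv alive] children_of_alive_asleep[OF inv alive]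
  by (auto simp: eta_def kill_child kill_other)

lemma eta_kill_leaf:
  assumes inv: "hydra_inv s" and alive: "s u = Alive" and leaf: "is_leaf V r p u" and "w \<noteq> u"
  shows "\<eta> (kill V r p s u) w - \<eta> s w =
    (if s w = Alive
     then real (rk s w) * (1 / real (rk (kill V r p s u) r) - 1 / real (rk s r)) else 0)"
proof -
  have "kill V r p s u w = s w"
    using leaf \<open>w \<noteq> u\<close> by (simp add: kill_other is_leaf_def)
  then show ?thesis
    using rank_kill_alive[OF inv alive _ \<open>w \<noteq> u\<close>] by (simp add: eta_def right_diff_distrib)
qed

lemma sum_eta_diff_kill_inner_le:
  assumes inv: "hydra_inv s" and alive: "s u = Alive" and inner: "\<not> is_leaf V r p u"
  shows "(\<Sum>w\<in>V - {u}. (\<eta> (kill V r p s u) w - \<eta> s w) * real (lvl w + dT u w))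
    \<le> real (rk s u) / real (rk s r) * real (lvl u)"
proof -
  let ?R = "real (rk s r)"
  have "(\<Sum>w\<in>V - {u}. (\<eta> (kill V r p s u) w - \<eta> s w) * real (lvl w + dT u w))
      = (\<Sum>c\<in>ch u. real (rk s c) / ?R * real (lvl c + dT u c))"
    using eta_kill_inner[OF inv alive inner] child_in_V[of _ u] child_neq[of _ u]
    by (intro sum.mono_neutral_cong_right) (auto simp: finite_V)
  also have "\<dots> \<le> (\<Sum>c\<in>ch u. real (rk s c) / ?R * real (lvl u))"
  proof (intro sum_mono mult_left_mono)
    fix c assume "c \<in> ch u"
    then show "real (lvl c + dT u c) \<le> real (lvl u)"
      using level_child tdist_child by fastforce
  qed simp
  also have "\<dots> = real (\<Sum>c\<in>ch u. rk s c) / ?R * real (lvl u)"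
    by (simp add: sum_distrib_right sum_divide_distrib)
  also have "\<dots> \<le> real (rk s u) / ?R * real (lvl u)"
  proof -
    have "(\<Sum>c\<in>ch u. rk s c) \<le> rk s u"
      using child_in_subtree children_subtrees_disjoint by (intro sum_rank_le) auto
    then show ?thesis
      by (intro mult_right_mono divide_right_mono) (simp_all flip: of_nat_sum)
  qed
  finally show ?thesis .
qed

lemma eta_le_eta_kill_leaf:
  assumes inv: "hydra_inv s" and alive: "s u = Alive" and leaf: "is_leaf V r p u"
    and w: "w \<in> V" "w \<noteq> u"
  shows "\<eta> s w \<le> \<eta> (kill V r p s u) w"
proof (cases "s w = Alive")
  case True
  let ?R' = "rk (kill V r p s u) r"
  have "0 \<le> real (rk s w) * (1 / real ?R' - 1 / real (Suc ?R'))"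
  proof (cases "?R' = 0")
    case True
    then have "rk s w = 0"
      using rank_kill_alive[OF inv alive \<open>s w = Alive\<close> w(2)]
        rank_le_root[OF w(1), of "kill V r p s u"] by simp
    then show ?thesis by simp
  qed (simp add: frac_le)
  then show ?thesis
    using eta_kill_leaf[OF inv alive leaf w(2)] rank_root_kill_leaf[of u s, OF leaf alive] True
    by simp
qed (use eta_kill_leaf[OF inv alive leaf w(2)] in simp)

lemma sum_eta_gain_kill_leaf_le:
  assumes inv: "hydra_inv s" and alive: "s u = Alive" and leaf: "is_leaf V r p u"
  shows "(\<Sum>w\<in>V - {u}. \<eta> (kill V r p s u) w - \<eta> s w) \<le> 1 / real (rk s r)"
proof -
  let ?s' = "kill V r p s u"
  define R' where "R' = rk ?s' r"
  define A where "A = {w \<in> V. ?s' w = Alive}"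
  define q where "q = 1 / real R' - 1 / real (Suc R')"
  have R: "rk s r = Suc R'"
    unfolding R'_def using rank_root_kill_leaf[of u s, OF leaf alive] .
  have A: "A = {w \<in> V. w \<noteq> u \<and> s w = Alive}"
    using leaf by (auto simp: A_def kill_def is_leaf_def)
  have "(\<Sum>w\<in>A. rk s w) = (\<Sum>w\<in>A. rk ?s' w)"
    using rank_kill_alive[OF inv alive] A by simp
  also have "\<dots> \<le> R'"
    unfolding A_def R'_def using sum_rank_alive_le[OF hydra_inv_kill[OF inv alive]] by simp
  finally have sum_A: "(\<Sum>w\<in>A. rk s w) \<le> R'" .
  have "(\<Sum>w\<in>V - {u}. \<eta> ?s' w - \<eta> s w) = (\<Sum>w\<in>A. real (rk s w) * q)"
    using eta_kill_leaf[OF inv alive leaf] R A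
    by (intro sum.mono_neutral_cong_right) (auto simp: q_def R'_def finite_V)
  also have "\<dots> = real (\<Sum>w\<in>A. rk s w) * q"
    by (simp add: sum_distrib_right)
  also have "\<dots> \<le> 1 / real (Suc R')"
  proof (cases "R' = 0")
    case True
    then show ?thesis using sum_A by simp
  next
    case False
    then have "0 \<le> q" "real R' * q = 1 / real (Suc R')"
      by (simp_all add: q_def frac_le right_diff_distrib divide_simps)
    moreover have "real (\<Sum>w\<in>A. rk s w) \<le> real R'"
      using sum_A by (rule of_nat_mono)
    ultimately show ?thesis
      using mult_right_mono[of "real (\<Sum>w\<in>A. rk s w)" "real R'" q] by simp
  qed
  finally show ?thesis
    using R by simp
qed

lemma sum_eta_diff_kill_leaf_le:
  assumes inv: "hydra_inv s" and alive: "s u = Alive" and leaf: "is_leaf V r p u"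
  shows "(\<Sum>w\<in>V - {u}. (\<eta> (kill V r p s u) w - \<eta> s w) * real (lvl w + dT u w))
    \<le> 3 * real height / real (rk s r)"
proof -
  let ?gain = "\<lambda>w. \<eta> (kill V r p s u) w - \<eta> s w"
  have "(\<Sum>w\<in>V - {u}. ?gain w * real (lvl w + dT u w)) \<le> (\<Sum>w\<in>V - {u}. ?gain w * (3 * real height))"
  proof (intro sum_mono mult_left_mono)
    fix w assume "w \<in> V - {u}"
    then show "real (lvl w + dT u w) \<le> 3 * real height" "0 \<le> ?gain w"
      using level_le_height tdist_le_twice_height eta_le_eta_kill_leaf[OF inv alive leaf] leaf
      by (fastforce simp: is_leaf_def)+
  qed
  also have "\<dots> = (\<Sum>w\<in>V - {u}. ?gain w) * (3 * real height)"
    by (simp add: sum_distrib_right)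
  also have "\<dots> \<le> 1 / real (rk s r) * (3 * real height)"
    using sum_eta_gain_kill_leaf_le[OF inv alive leaf] by (intro mult_right_mono) simp_all
  finally show ?thesis by simp
qed

lemma amortized_kill:
  assumes inv: "hydra_inv s" and "u \<in> V" and alive: "s u = Alive"
  shows "Phi V r p (kill V r p s u) - Phi V r p s \<le> - herc_cost V r p s (kill V r p s u) u"
proof -
  let ?s' = "kill V r p s u"
  let ?R = "real (rk s r)"
  let ?shift = "\<Sum>w\<in>V - {u}. (\<eta> ?s' w - \<eta> s w) * real (lvl w + dT u w)"
  have "4 * real height * (harm (rk ?s' r) - harm (rk s r)) + (\<eta> ?s' u - \<eta> s u) * real (lvl u)
      + ?shift \<le> 0"
  proof (cases "is_leaf V r p u")
    case True
    have "harm (rk ?s' r) - harm (rk s r) = - 1 / ?R"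
      using rank_root_kill_leaf[of u s, OF True alive] by (simp add: harm_Suc inverse_eq_divide)
    moreover have "(\<eta> ?s' u - \<eta> s u) * real (lvl u) \<le> 0"
      using eta_nonneg[of s u] by (simp add: eta_kill_self)
    moreover have "?shift \<le> 3 * real height / ?R"
      using sum_eta_diff_kill_leaf_le[OF inv alive True] .
    moreover have "3 * real height / ?R \<le> 4 * real height / ?R"
      by (intro divide_right_mono) auto
    ultimately show ?thesis
      by simp
  next
    case False
    have "rk ?s' r = rk s r"
      using rank_kill[OF inv alive] False by blast
    moreover have "\<eta> ?s' u - \<eta> s u = - (real (rk s u) / ?R)"
      using alive by (simp add: eta_kill_self) (simp add: eta_def)
    moreover have "?shift \<le> real (rk s u) / ?R * real (lvl u)"
      using sum_eta_diff_kill_inner_le[OF inv alive False] .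
    ultimately show ?thesis
      by simp
  qed
  then show ?thesis
    using Phi_diff_add_herc_cost[OF \<open>u \<in> V\<close>, of ?s' s] by linarith
qed

end

theorem lemma3:
  fixes V :: "'a set" and r :: 'a and p :: "'a \<Rightarrow> 'a"
    and st :: "'a \<Rightarrow> status" and u :: 'a
  assumes "rooted_tree V r p"
    and "reachable V r p st"
    and "\<not> game_ended V st"
    and "u \<in> V" and "st u = Alive"
  shows "Phi V r p (kill V r p st u) - Phi V r p st
           \<le> - herc_cost V r p st (kill V r p st u) u"
proof -
  interpret finite_tree V r p
    using assms(1) by (rule finite_tree.intro)
  show ?thesis
    using amortized_kill[OF reachable_hydra_inv[OF assms(2)] assms(4,5)] .
qed

end
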